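(* Let $m,n\ge 1$ and let $P=\mathbb{R}^{m\times n}$ be the space of real $m\times n$ arrays $z=(z_{ij})$, with the group $\Gamma=\mathbf{S}_m\times\mathbf{S}_n$ acting by $((\sigma,\tau)z)_{ij}=z_{\sigma^{-1}(i)\,\tau^{-1}(j)}$. Then a linear map $L:P\to P$ commutes with the action of $\Gamma$ (i.e. $L(\gamma z)=\gamma L(z)$ for all $\gamma\in\Gamma$, $z\in P$) if and only if $L$ is a linear admissible map for the influence network $\mathcal{N}_{mn}$, i.e. if and only if there exist real constants $\alpha,\beta,\gamma,\delta$ such that for all $i,j$ $$L(z)_{ij}=\alpha z_{ij}+\beta\sum_{l\ne j}z_{il}+\gamma\sum_{k\ne i}z_{kj}+\delta\sum_{k\ne i,\,l\ne j}z_{kl}.$$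
   Context: The influence network $\mathcal{N}_{mn}$ has node set $\{(i,j):1\le i\le m,\ 1\le j\le n\}$, all nodes of one type, and three arrow types into each node $(i,j)$: row arrows from the nodes in $A_{ij}=\{(i,l):l\ne j\}$, column arrows from $O_{ij}=\{(k,j):k\ne i\}$, and diagonal arrows from $E_{ij}=\{(k,l):k\ne i,\ l\ne j\}$. A map $G:P\to P$ is admissible for $\mathcal{N}_{mn}$ if there is a single function $g$, independent of $(i,j)$, with $G_{ij}(z)=g(z_{ij},z_{A_{ij}},z_{O_{ij}},z_{E_{ij}})$, where $g$ is invariant under all permutations of the arguments within each of the three groups $z_{A_{ij}}$, $z_{O_{ij}}$, $z_{E_{ij}}$. Linear admissible maps are exactly those of the displayed form. *)

theory Defs
  imports "HOL-Analysis.Analysis" "HOL-Combinatorics.Permutations"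
begin

text \<open>Arrays z in R^{m x n} are modelled as real^'n^'m (row index in 'm, column index in 'n).
  The action of (sigma, tau) in S_m x S_n: ((sigma,tau) z)_{ij} = z_{sigma^-1(i), tau^-1(j)}.\<close>

definition gamma_act :: "('m::finite \<Rightarrow> 'm) \<Rightarrow> ('n::finite \<Rightarrow> 'n) \<Rightarrow> real^'n^'m \<Rightarrow> real^'n^'m" where
  "gamma_act \<sigma> \<tau> z = (\<chi> i j. z $ (inv \<sigma> i) $ (inv \<tau> j))"

end

theory Submission
  imports Defs
begin

text \<open>A linear map on arrays is given by coefficients c i j k l (the i,j entry of the image
  of the unit array at k,l). Equivariance makes c invariant under simultaneous permutation of
  rows and columns, and the orbits of S_m x S_n on pairs of positions are determined by whether
  the row indices agree and whether the column indices agree; this leaves four coefficients.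
  Conversely a map whose coefficients only depend on these equality patterns is equivariant,
  because the patterns are preserved by reindexing the sums.\<close>

definition gamma_equivariant :: "(real^'n::finite^'m::finite \<Rightarrow> real^'n^'m) \<Rightarrow> bool" where
  "gamma_equivariant L \<longleftrightarrow> (\<forall>\<sigma> \<tau> z. \<sigma> permutes (UNIV :: 'm set) \<and> \<tau> permutes (UNIV :: 'n set) \<longrightarrow>
     L (gamma_act \<sigma> \<tau> z) = gamma_act \<sigma> \<tau> (L z))"

definition eq_pattern_map :: "(bool \<Rightarrow> bool \<Rightarrow> real) \<Rightarrow> real^'n::finite^'m::finite \<Rightarrow> real^'n^'m" where
  "eq_pattern_map f z = (\<chi> i j. \<Sum>k\<in>UNIV. \<Sum>l\<in>UNIV. z $ k $ l * f (k = i) (l = j))"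

lemma gamma_act_nth [simp]: "gamma_act \<sigma> \<tau> z $ i $ j = z $ inv \<sigma> i $ inv \<tau> j"
  by (simp add: gamma_act_def)

lemma gamma_act_axis:
  assumes "\<sigma> permutes UNIV" "\<tau> permutes UNIV"
  shows "gamma_act \<sigma> \<tau> (axis k (axis l 1)) = axis (\<sigma> k) (axis (\<tau> l) 1)"
  using assms by (auto simp: vec_eq_iff axis_def permutes_inv_eq)

lemma array_basis_expansion:
  "(\<Sum>k\<in>UNIV. \<Sum>l\<in>UNIV. (z $ k $ l) *\<^sub>R axis k (axis l 1)) = (z :: real^'n::finite^'m::finite)"
  by (simp add: vec_eq_iff axis_def if_distrib[of "\<lambda>x. x $ _"] if_distrib[of "(*) _"] cong: if_cong)
    (simp add: sum.If_cases)

lemma linear_array_nth: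
  fixes L :: "real^'n::finite^'m::finite \<Rightarrow> real^'q^'p"
  assumes "linear L"
  shows "L z $ i $ j = (\<Sum>k\<in>UNIV. \<Sum>l\<in>UNIV. z $ k $ l * L (axis k (axis l 1)) $ i $ j)"
proof -
  have "L z = (\<Sum>k\<in>UNIV. \<Sum>l\<in>UNIV. (z $ k $ l) *\<^sub>R L (axis k (axis l 1)))"
    using assms by (subst array_basis_expansion [symmetric]) (simp add: linear_sum linear_scale)
  then show ?thesis by simp
qed

lemma permutes_exists_pair:
  fixes i k i' k' :: 'a
  assumes "(i = k) = (i' = k')"
  obtains \<sigma> where "\<sigma> permutes UNIV" "\<sigma> i = i'" "\<sigma> k = k'"
proof
  let ?\<rho> = "Transposition.transpose i i'"
  show "Transposition.transpose (?\<rho> k) k' \<circ> ?\<rho> permutes UNIV"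
    by (intro permutes_compose permutes_swap_id) auto
  show "(Transposition.transpose (?\<rho> k) k' \<circ> ?\<rho>) i = i'"
       "(Transposition.transpose (?\<rho> k) k' \<circ> ?\<rho>) k = k'"
    using assms by (auto simp: Transposition.transpose_def)
qed

lemma eq_pattern_representative:
  fixes i k a :: 'a
  shows "(i = k) = (a = (if k = i then a else SOME x. x \<noteq> a))"
proof (cases "k = i")
  case False
  then have "\<exists>x. x \<noteq> a"
    by metis
  then have "(SOME x. x \<noteq> a) \<noteq> a"
    by (rule someI_ex)
  with False show ?thesis
    by simp
qed simp

lemma permutation_invariant_eq_pattern:
  fixes c :: "'m \<Rightarrow> 'n \<Rightarrow> 'm \<Rightarrow> 'n \<Rightarrow> 'b"
  assumes "\<And>\<sigma> \<tau> i j k l. \<sigma> permutes UNIV \<Longrightarrow> \<tau> permutes UNIV \<Longrightarrow>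
             c (\<sigma> i) (\<tau> j) (\<sigma> k) (\<tau> l) = c i j k l"
  shows "\<exists>f. \<forall>i j k l. c i j k l = f (k = i) (l = j)"
proof -
  have same_pattern: "c i j k l = c i' j' k' l'"
    if rows: "(i = k) = (i' = k')" and cols: "(j = l) = (j' = l')" for i j k l i' j' k' l'
  proof -
    obtain \<sigma> where "\<sigma> permutes UNIV" "\<sigma> i = i'" "\<sigma> k = k'"
      using permutes_exists_pair [OF rows] .
    moreover obtain \<tau> where "\<tau> permutes UNIV" "\<tau> j = j'" "\<tau> l = l'"
      using permutes_exists_pair [OF cols] .
    ultimately show ?thesis
      using assms by metis
  qed
  fix i0 :: 'm and j0 :: 'n
  define f where
    "f p q = c i0 j0 (if p then i0 else SOME k. k \<noteq> i0) (if q then j0 else SOME l. l \<noteq> j0)" for p q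
  have "c i j k l = f (k = i) (l = j)" for i j k l
    unfolding f_def
  proof (rule same_pattern)
    show "(i = k) = (i0 = (if k = i then i0 else SOME k. k \<noteq> i0))"
      by (rule eq_pattern_representative)
    show "(j = l) = (j0 = (if l = j then j0 else SOME l. l \<noteq> j0))"
      by (rule eq_pattern_representative)
  qed
  then show ?thesis
    by blast
qed

lemma sum_permutes_array:
  fixes g :: "'m \<Rightarrow> 'n \<Rightarrow> 'a::comm_monoid_add"
  assumes "\<sigma> permutes UNIV" "\<tau> permutes UNIV"
  shows "(\<Sum>k\<in>UNIV. \<Sum>l\<in>UNIV. g (\<sigma> k) (\<tau> l)) = (\<Sum>k\<in>UNIV. \<Sum>l\<in>UNIV. g k l)"
proof -
  have "(\<Sum>k\<in>UNIV. \<Sum>l\<in>UNIV. g (\<sigma> k) (\<tau> l)) = (\<Sum>k\<in>UNIV. \<Sum>l\<in>UNIV. g (\<sigma> k) l)"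
    by (rule sum.cong [OF refl], rule sum.permute [OF assms(2), symmetric, unfolded comp_def])
  also have "\<dots> = (\<Sum>k\<in>UNIV. \<Sum>l\<in>UNIV. g k l)"
    by (rule sum.permute [OF assms(1), symmetric, unfolded comp_def])
  finally show ?thesis .
qed

lemma eq_pattern_map_nth:
  "eq_pattern_map f z $ i $ j =
    f True True * z $ i $ j + f True False * (\<Sum>l\<in>UNIV - {j}. z $ i $ l)
    + f False True * (\<Sum>k\<in>UNIV - {i}. z $ k $ j)
    + f False False * (\<Sum>k\<in>UNIV - {i}. \<Sum>l\<in>UNIV - {j}. z $ k $ l)"
proof -
  have row: "(\<Sum>l\<in>UNIV. z $ k $ l * f p (l = j))
      = f p True * z $ k $ j + f p False * (\<Sum>l\<in>UNIV - {j}. z $ k $ l)" for k p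
    by (simp add: sum.remove [of UNIV j] sum_distrib_left mult.commute)
  have "eq_pattern_map f z $ i $ j = (\<Sum>l\<in>UNIV. z $ i $ l * f True (l = j))
      + (\<Sum>k\<in>UNIV - {i}. \<Sum>l\<in>UNIV. z $ k $ l * f False (l = j))"
    by (simp add: eq_pattern_map_def sum.remove [of UNIV i])
  then show ?thesis
    by (simp add: row sum.distrib sum_distrib_left)
qed

lemma eq_pattern_map_equivariant: "gamma_equivariant (eq_pattern_map f)"
  unfolding gamma_equivariant_def
proof (intro allI impI, elim conjE)
  fix \<sigma> :: "'m::finite \<Rightarrow> 'm" and \<tau> :: "'n::finite \<Rightarrow> 'n" and z :: "real^'n^'m"
  assume \<sigma>: "\<sigma> permutes UNIV" and \<tau>: "\<tau> permutes UNIV"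
  have "eq_pattern_map f (gamma_act \<sigma> \<tau> z) $ i $ j = eq_pattern_map f z $ inv \<sigma> i $ inv \<tau> j" for i j
  proof -
    have "eq_pattern_map f (gamma_act \<sigma> \<tau> z) $ i $ j
        = (\<Sum>k\<in>UNIV. \<Sum>l\<in>UNIV. z $ inv \<sigma> k $ inv \<tau> l * f (k = i) (l = j))"
      by (simp add: eq_pattern_map_def)
    also have "\<dots> = (\<Sum>k\<in>UNIV. \<Sum>l\<in>UNIV.
        z $ inv \<sigma> (\<sigma> k) $ inv \<tau> (\<tau> l) * f (\<sigma> k = i) (\<tau> l = j))"
      by (rule sum_permutes_array [OF \<sigma> \<tau>, symmetric])
    also have "\<dots> = (\<Sum>k\<in>UNIV. \<Sum>l\<in>UNIV. z $ k $ l * f (\<sigma> k = i) (\<tau> l = j))"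
      using \<sigma> \<tau> by (simp add: permutes_inverses)
    also have "\<dots> = (\<Sum>k\<in>UNIV. \<Sum>l\<in>UNIV. z $ k $ l * f (k = inv \<sigma> i) (l = inv \<tau> j))"
      using permutes_inv_eq [OF \<sigma>, of i] permutes_inv_eq [OF \<tau>, of j] by (simp add: eq_commute)
    also have "\<dots> = eq_pattern_map f z $ inv \<sigma> i $ inv \<tau> j"
      by (simp add: eq_pattern_map_def)
    finally show ?thesis .
  qed
  then show "eq_pattern_map f (gamma_act \<sigma> \<tau> z) = gamma_act \<sigma> \<tau> (eq_pattern_map f z)"
    by (simp add: vec_eq_iff)
qed

lemma linear_equivariant_imp_eq_pattern_map:
  assumes "linear L" "gamma_equivariant L"
  shows "\<exists>f. L = eq_pattern_map f"
proof -
  define c where "c i j k l = L (axis k (axis l 1)) $ i $ j" for i j k l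
  have invariant: "c (\<sigma> i) (\<tau> j) (\<sigma> k) (\<tau> l) = c i j k l"
    if "\<sigma> permutes UNIV" "\<tau> permutes UNIV" for \<sigma> \<tau> i j k l
    using assms(2) that
    by (simp add: c_def gamma_equivariant_def gamma_act_axis [symmetric] permutes_inverses)
  obtain f where "\<And>i j k l. c i j k l = f (k = i) (l = j)"
    using permutation_invariant_eq_pattern [of c, OF invariant] by blast
  moreover have "L z $ i $ j = (\<Sum>k\<in>UNIV. \<Sum>l\<in>UNIV. z $ k $ l * c i j k l)" for z i j
    unfolding c_def by (rule linear_array_nth [OF assms(1)])
  ultimately have "L = eq_pattern_map f"
    by (simp add: fun_eq_iff vec_eq_iff eq_pattern_map_def)
  then show ?thesis
    by blast
qed

lemma eq_pattern_map_iff_coefficients: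
  "(\<exists>f. L = eq_pattern_map f)
     \<longleftrightarrow> (\<exists>\<alpha> \<beta> \<gamma> \<delta> :: real. \<forall>z i j.
            L z $ i $ j = \<alpha> * z $ i $ j
              + \<beta> * (\<Sum>l\<in>UNIV - {j}. z $ i $ l)
              + \<gamma> * (\<Sum>k\<in>UNIV - {i}. z $ k $ j)
              + \<delta> * (\<Sum>k\<in>UNIV - {i}. \<Sum>l\<in>UNIV - {j}. z $ k $ l))"
    (is "_ \<longleftrightarrow> (\<exists>\<alpha> \<beta> \<gamma> \<delta>. ?coefficients \<alpha> \<beta> \<gamma> \<delta>)")
proof
  assume "\<exists>f. L = eq_pattern_map f"
  then obtain f where "L = eq_pattern_map f" ..
  then have "?coefficients (f True True) (f True False) (f False True) (f False False)"
    by (simp add: eq_pattern_map_nth)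
  then show "\<exists>\<alpha> \<beta> \<gamma> \<delta>. ?coefficients \<alpha> \<beta> \<gamma> \<delta>"
    by blast
next
  assume "\<exists>\<alpha> \<beta> \<gamma> \<delta>. ?coefficients \<alpha> \<beta> \<gamma> \<delta>"
  then obtain \<alpha> \<beta> \<gamma> \<delta> where "?coefficients \<alpha> \<beta> \<gamma> \<delta>"
    by blast
  then have "L = eq_pattern_map (\<lambda>p q. if p then if q then \<alpha> else \<beta> else if q then \<gamma> else \<delta>)"
    by (simp add: fun_eq_iff vec_eq_iff eq_pattern_map_nth)
  then show "\<exists>f. L = eq_pattern_map f"
    by blast
qed

theorem theorem4p2:
  fixes L :: "real^'n::finite^'m::finite \<Rightarrow> real^'n^'m"
  assumes "linear L"
  shows "(\<forall>\<sigma> \<tau> z. \<sigma> permutes (UNIV :: 'm set) \<and> \<tau> permutes (UNIV :: 'n set) \<longrightarrow>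
            L (gamma_act \<sigma> \<tau> z) = gamma_act \<sigma> \<tau> (L z))
     \<longleftrightarrow> (\<exists>\<alpha> \<beta> \<gamma> \<delta> :: real. \<forall>z i j.
            L z $ i $ j = \<alpha> * z $ i $ j
              + \<beta> * (\<Sum>l\<in>UNIV - {j}. z $ i $ l)
              + \<gamma> * (\<Sum>k\<in>UNIV - {i}. z $ k $ j)
              + \<delta> * (\<Sum>k\<in>UNIV - {i}. \<Sum>l\<in>UNIV - {j}. z $ k $ l))"
proof -
  have "gamma_equivariant L \<longleftrightarrow> (\<exists>f. L = eq_pattern_map f)"
    using linear_equivariant_imp_eq_pattern_map [OF assms] eq_pattern_map_equivariant by blast
  then show ?thesis
    unfolding eq_pattern_map_iff_coefficients gamma_equivariant_def .
qed

end
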